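(* Let $A$ and $B$ be discrete random variables with finite supports such that $\{A,B\}$ is quasi-uniform. Then there exists a random variable $W$, jointly distributed with $(A,B)$, such that $H(W)=H(A\mid B)$ and $H(A\mid B,W)=0$.
   Context: A family of random variables $\{X_i:i\in\mathcal N\}$ is quasi-uniform if for every subset $\alpha\subseteq\mathcal N$, the random variable $(X_i:i\in\alpha)$ is uniformly distributed over its support; for $\{A,B\}$ this means $A$, $B$ and $(A,B)$ are each uniform on their supports. *)

theory Defs
  imports "HOL-Probability.Probability"
begin

definition entropy_pmf :: "'a pmf \<Rightarrow> real" where
  "entropy_pmf p = - (\<Sum>x\<in>set_pmf p. pmf p x * log 2 (pmf p x))"

definition cond_entropy_pmf :: "('a \<times> 'b) pmf \<Rightarrow> real" where
  "cond_entropy_pmf J =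
     - (\<Sum>z\<in>set_pmf J. pmf J z * log 2 (pmf J z / pmf (map_pmf snd J) (snd z)))"

definition uniform_on_support :: "'a pmf \<Rightarrow> bool" where
  "uniform_on_support p \<longleftrightarrow> (\<forall>x\<in>set_pmf p. \<forall>y\<in>set_pmf p. pmf p x = pmf p y)"

text \<open>The pair {A, B}, given by its joint distribution P, is quasi-uniform:
  A, B and (A, B) are each uniform on their supports (the empty subset is trivial).\<close>
definition quasi_uniform2 :: "('a \<times> 'b) pmf \<Rightarrow> bool" where
  "quasi_uniform2 P \<longleftrightarrow> uniform_on_support (map_pmf fst P) \<and>
     uniform_on_support (map_pmf snd P) \<and> uniform_on_support P"

end

theory Submission
  imports Defs
begin

text \<open>Quasi-uniformity forces all fibres of the support of \<open>(A, B)\<close> over the support of \<open>B\<close>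
  to have the same size \<open>k = |supp (A, B)| / |supp B|\<close>, so \<open>H(A | B) = log k\<close>. Numbering the
  points of every fibre by \<open>0, \<dots>, k - 1\<close> and letting \<open>W\<close> be this number, each value of \<open>W\<close>
  is taken on exactly one point of every fibre; hence \<open>W\<close> is uniform on \<open>k\<close> values, and
  \<open>(B, W)\<close> determines \<open>A\<close>.\<close>

lemma pmf_map_pmf_finite:
  assumes "finite (set_pmf p)"
  shows "pmf (map_pmf f p) y = sum (pmf p) {z \<in> set_pmf p. f z = y}"
proof -
  have "pmf (map_pmf f p) y = measure p (f -` {y} \<inter> set_pmf p)"
    by (simp add: pmf_map measure_Int_set_pmf)
  also have "f -` {y} \<inter> set_pmf p = {z \<in> set_pmf p. f z = y}" by auto
  finally show ?thesis
    using assms by (simp add: measure_measure_pmf_finite)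
qed

lemma pmf_uniform_on_support:
  assumes "finite (set_pmf p)" "uniform_on_support p" "x \<in> set_pmf p"
  shows "pmf p x = 1 / card (set_pmf p)"
proof -
  have "(\<Sum>y\<in>set_pmf p. pmf p x) = (\<Sum>y\<in>set_pmf p. pmf p y)"
    using assms(2,3) unfolding uniform_on_support_def by (intro sum.cong) blast+
  also have "\<dots> = 1" using sum_pmf_eq_1[OF assms(1)] by simp
  finally have "card (set_pmf p) * pmf p x = 1" by simp
  moreover have "card (set_pmf p) \<noteq> 0" using assms(1,3) by auto
  ultimately show ?thesis
    by (simp add: eq_divide_eq mult.commute)
qed

lemma entropy_pmf_uniform_on_support:
  assumes "finite (set_pmf p)" "uniform_on_support p"
  shows "entropy_pmf p = log 2 (card (set_pmf p))"
proof -
  let ?n = "real (card (set_pmf p))"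
  have "?n > 0" using assms(1) set_pmf_not_empty by (simp add: card_gt_0_iff)
  have "entropy_pmf p = - (\<Sum>x\<in>set_pmf p. 1 / ?n * log 2 (1 / ?n))"
    unfolding entropy_pmf_def using assms by (simp add: pmf_uniform_on_support)
  also have "\<dots> = log 2 ?n"
    using \<open>?n > 0\<close> by (simp add: log_divide)
  finally show ?thesis .
qed

lemma cond_entropy_pmf_eq_0_if_inj_on_snd:
  assumes "inj_on snd (set_pmf J)"
  shows "cond_entropy_pmf J = 0"
  unfolding cond_entropy_pmf_def using assms
  by (simp add: pmf_map_inj set_pmf_iff)

lemma cond_entropy_pmf_uniform_on_support:
  assumes "finite (set_pmf P)" "uniform_on_support P" "uniform_on_support (map_pmf snd P)"
  shows "cond_entropy_pmf P =
           log 2 (card (set_pmf P) / card (set_pmf (map_pmf snd P)))"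
proof -
  let ?N = "real (card (set_pmf P))" and ?M = "real (card (set_pmf (map_pmf snd P)))"
  have "?N > 0" "?M > 0"
    using assms(1) set_pmf_not_empty by (simp_all add: card_gt_0_iff)
  have "cond_entropy_pmf P = - (\<Sum>z\<in>set_pmf P. 1 / ?N * log 2 ((1 / ?N) / (1 / ?M)))"
    unfolding cond_entropy_pmf_def using assms
    by (intro arg_cong[where f = uminus] sum.cong) (auto simp: pmf_uniform_on_support)
  also have "\<dots> = log 2 (?N / ?M)"
    using \<open>?N > 0\<close> \<open>?M > 0\<close> by (simp add: log_divide)
  finally show ?thesis .
qed

definition fibre_numbering :: "('z \<Rightarrow> 'b) \<Rightarrow> ('z \<Rightarrow> nat) \<Rightarrow> nat \<Rightarrow> 'z set \<Rightarrow> bool" where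
  "fibre_numbering f g k S \<longleftrightarrow> (\<forall>b\<in>f ` S. bij_betw g {z \<in> S. f z = b} {0..<k})"

lemma fibre_numbering_exists:
  assumes "finite S" "\<And>b. b \<in> f ` S \<Longrightarrow> card {z \<in> S. f z = b} = k"
  shows "\<exists>g. fibre_numbering f g k S"
proof -
  have "\<exists>h. bij_betw h {z \<in> S. f z = b} {0..<k}" if "b \<in> f ` S" for b
    using ex_bij_betw_finite_nat[of "{z \<in> S. f z = b}"] assms(1) assms(2)[OF that] by simp
  then obtain h where h: "\<And>b. b \<in> f ` S \<Longrightarrow> bij_betw (h b) {z \<in> S. f z = b} {0..<k}"
    by metis
  have "bij_betw (\<lambda>z. h (f z) z) {z \<in> S. f z = b} {0..<k}" if "b \<in> f ` S" for b
  proof -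
    have "bij_betw (\<lambda>z. h (f z) z) {z \<in> S. f z = b} {0..<k} =
          bij_betw (h b) {z \<in> S. f z = b} {0..<k}"
      by (rule bij_betw_cong) simp
    then show ?thesis using h[OF that] by simp
  qed
  then show ?thesis unfolding fibre_numbering_def by blast
qed

lemma fibre_numbering_inj_on:
  assumes "fibre_numbering f g k S"
  shows "inj_on (\<lambda>z. (f z, g z)) S"
proof (rule inj_onI)
  fix z z' assume z: "z \<in> S" "z' \<in> S" and eq: "(f z, g z) = (f z', g z')"
  have "inj_on g {y \<in> S. f y = f z}"
    using assms z(1) unfolding fibre_numbering_def by (simp add: bij_betw_def)
  then show "z = z'" using z eq by (auto dest: inj_onD)
qed

lemma fibre_numbering_image:
  assumes "fibre_numbering f g k S" "S \<noteq> {}"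
  shows "g ` S = {0..<k}"
proof
  show "g ` S \<subseteq> {0..<k}"
  proof
    fix i assume "i \<in> g ` S"
    then obtain z where "z \<in> S" "i = g z" by blast
    moreover have "g ` {y \<in> S. f y = f z} = {0..<k}"
      using assms(1) \<open>z \<in> S\<close> unfolding fibre_numbering_def by (simp add: bij_betw_def)
    ultimately show "i \<in> {0..<k}" by blast
  qed
  obtain z where "z \<in> S" using assms(2) by blast
  then have "g ` {y \<in> S. f y = f z} = {0..<k}"
    using assms(1) unfolding fibre_numbering_def by (simp add: bij_betw_def)
  then show "{0..<k} \<subseteq> g ` S" by blast
qed

lemma fibre_numbering_card_level_set:
  assumes "fibre_numbering f g k S" "i < k"
  shows "card {z \<in> S. g z = i} = card (f ` S)"
proof -
  have "bij_betw f {z \<in> S. g z = i} (f ` S)"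
  proof (rule bij_betw_imageI)
    show "inj_on f {z \<in> S. g z = i}"
    proof (rule inj_onI)
      fix z z' assume "z \<in> {z \<in> S. g z = i}" "z' \<in> {z \<in> S. g z = i}" "f z = f z'"
      then show "z = z'"
        by (intro inj_onD[OF fibre_numbering_inj_on[OF assms(1)]]) simp_all
    qed
    show "f ` {z \<in> S. g z = i} = f ` S"
    proof
      show "f ` S \<subseteq> f ` {z \<in> S. g z = i}"
      proof
        fix b assume "b \<in> f ` S"
        then have "bij_betw g {z \<in> S. f z = b} {0..<k}"
          using assms(1) unfolding fibre_numbering_def by blast
        then have "i \<in> g ` {z \<in> S. f z = b}" using assms(2) by (simp add: bij_betw_def)
        then obtain z where "z \<in> S" "f z = b" "g z = i" by blast
        then show "b \<in> f ` {z \<in> S. g z = i}" by blast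
      qed
    qed blast
  qed
  then show ?thesis by (rule bij_betw_same_card)
qed

lemma uniform_on_support_fibre_numbering:
  assumes "finite (set_pmf P)" "uniform_on_support P"
    and "fibre_numbering f g k (set_pmf P)"
  shows "uniform_on_support (map_pmf g P)"
proof -
  have "pmf (map_pmf g P) i = card (f ` set_pmf P) / card (set_pmf P)"
    if "i \<in> set_pmf (map_pmf g P)" for i
  proof -
    have "i < k"
      using that fibre_numbering_image[OF assms(3) set_pmf_not_empty] by auto
    then show ?thesis
      using assms by (simp add: pmf_map_pmf_finite pmf_uniform_on_support
          fibre_numbering_card_level_set)
  qed
  then show ?thesis unfolding uniform_on_support_def by simp
qed

lemma entropy_pmf_map_fibre_numbering:
  assumes "finite (set_pmf P)" "uniform_on_support P"
    and "fibre_numbering f g k (set_pmf P)"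
  shows "entropy_pmf (map_pmf g P) = log 2 k"
  using assms(1) uniform_on_support_fibre_numbering[OF assms]
    fibre_numbering_image[OF assms(3) set_pmf_not_empty]
  by (simp add: entropy_pmf_uniform_on_support)

lemma quasi_uniform2_fibre_numbering:
  assumes "finite (set_pmf P)" "quasi_uniform2 P"
  obtains g k where "fibre_numbering snd g k (set_pmf P)"
    and "real k = card (set_pmf P) / card (set_pmf (map_pmf snd P))"
proof -
  let ?S = "set_pmf P" and ?N = "card (set_pmf P)" and ?M = "card (set_pmf (map_pmf snd P))"
  have unif: "uniform_on_support P" "uniform_on_support (map_pmf snd P)"
    using assms(2) unfolding quasi_uniform2_def by blast+
  have fin_snd: "finite (set_pmf (map_pmf snd P))"
    using assms(1) by simp
  have M_pos: "?M > 0"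
    using fin_snd set_pmf_not_empty[of "map_pmf snd P"] card_gt_0_iff by blast
  have N_pos: "?N > 0"
    using assms(1) set_pmf_not_empty[of P] card_gt_0_iff by blast
  have fibre: "real (card {z \<in> ?S. snd z = b}) = ?N / ?M" if "b \<in> snd ` ?S" for b
  proof -
    have "1 / real ?M = pmf (map_pmf snd P) b"
      using that fin_snd unif(2) by (simp add: pmf_uniform_on_support)
    also have "\<dots> = (\<Sum>z\<in>{z \<in> ?S. snd z = b}. pmf P z)"
      by (rule pmf_map_pmf_finite[OF assms(1)])
    also have "\<dots> = (\<Sum>z\<in>{z \<in> ?S. snd z = b}. 1 / real ?N)"
      using assms(1) unif(1) by (intro sum.cong) (simp_all add: pmf_uniform_on_support)
    also have "\<dots> = card {z \<in> ?S. snd z = b} / real ?N"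
      by simp
    finally show ?thesis
      using M_pos N_pos by (simp add: field_simps)
  qed
  obtain b where b: "b \<in> snd ` ?S"
    using set_pmf_not_empty[of P] by blast
  define k where "k = card {z \<in> ?S. snd z = b}"
  have "card {z \<in> ?S. snd z = b'} = k" if "b' \<in> snd ` ?S" for b'
  proof -
    have "real (card {z \<in> ?S. snd z = b'}) = real k"
      using fibre[OF that] fibre[OF b] unfolding k_def by (rule trans[OF _ sym])
    then show ?thesis by (rule of_nat_eq_iff[THEN iffD1])
  qed
  then have "\<exists>g. fibre_numbering snd g k ?S"
    by (rule fibre_numbering_exists[OF assms(1)])
  then obtain g where "fibre_numbering snd g k ?S" ..
  from this fibre[OF b] show ?thesis
    unfolding k_def by (rule that)
qed

theorem lemma2:
  fixes P :: "('a \<times> 'b) pmf"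
  assumes "finite (set_pmf (map_pmf fst P))"
    and "finite (set_pmf (map_pmf snd P))"
    and "quasi_uniform2 P"
  shows "\<exists>Q :: ('a \<times> 'b \<times> nat) pmf.
           map_pmf (\<lambda>(a, b, w). (a, b)) Q = P \<and>
           finite (set_pmf (map_pmf (\<lambda>(a, b, w). w) Q)) \<and>
           entropy_pmf (map_pmf (\<lambda>(a, b, w). w) Q) = cond_entropy_pmf P \<and>
           cond_entropy_pmf (map_pmf (\<lambda>(a, b, w). (a, (b, w))) Q) = 0"
proof -
  have fin: "finite (set_pmf P)"
    using assms(1,2) by (auto intro: finite_subset[OF subset_fst_snd])
  obtain g k where num: "fibre_numbering snd g k (set_pmf P)"
    and k: "real k = card (set_pmf P) / card (set_pmf (map_pmf snd P))"
    using quasi_uniform2_fibre_numbering[OF fin assms(3)] .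
  have unif: "uniform_on_support P" "uniform_on_support (map_pmf snd P)"
    using assms(3) unfolding quasi_uniform2_def by blast+
  define Q where "Q = map_pmf (\<lambda>z. (fst z, snd z, g z)) P"
  have W: "map_pmf (\<lambda>(a, b, w). w) Q = map_pmf g P"
    by (simp add: Q_def pmf.map_comp o_def)
  have "entropy_pmf (map_pmf g P) = cond_entropy_pmf P"
    using entropy_pmf_map_fibre_numbering[OF fin unif(1) num]
      cond_entropy_pmf_uniform_on_support[OF fin unif] k by simp
  moreover have "finite (set_pmf (map_pmf g P))"
    using fin by simp
  moreover have "inj_on snd (set_pmf (map_pmf (\<lambda>z. (fst z, snd z, g z)) P))"
    using fibre_numbering_inj_on[OF num] by (simp add: inj_on_imageI o_def)
  then have "cond_entropy_pmf (map_pmf (\<lambda>(a, b, w). (a, (b, w))) Q) = 0"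
    unfolding Q_def pmf.map_comp o_def split_beta fst_conv snd_conv
    by (rule cond_entropy_pmf_eq_0_if_inj_on_snd)
  moreover have "map_pmf (\<lambda>(a, b, w). (a, b)) Q = P"
    by (simp add: Q_def pmf.map_comp o_def)
  ultimately show ?thesis
    unfolding W [symmetric] by blast
qed

end
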